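(* Let $V$ be a vertex operator algebra and fix $n\in\mathbb{N}$. Let $u\in V$ be homogeneous and $v\in V$. (a) If $\mathrm{wt}\,u>-n$, then for every integer $m\ge n+1$, \[ u_{\mathrm{wt}\,u-m-1}v\ \sim_n\ (-1)^{m+\mathrm{wt}\,u}\sum_{j=1}^{n+\mathrm{wt}\,u}\binom{m-n-1}{j-1}\binom{m-n-j-1}{n+\mathrm{wt}\,u-j}\,u_{\mathrm{wt}\,u-n-j-1}v . \] Moreover, for $n+1\le m\le 2n+\mathrm{wt}\,u$ the right-hand side equals $u_{\mathrm{wt}\,u-m-1}v$ (so the relation is trivial in that range). (b) If $\mathrm{wt}\,u=-n$, then for every integer $m\ge n+1$, $u_{\mathrm{wt}\,u-m-1}v\sim_n 0$.
   Context: $V$ is a vertex operator algebra with vacuum $\mathbf{1}$, vertex operator $Y(v,x)=\sum_{k\in\mathbb{Z}}v_kx^{-k-1}$, and Virasoro operators $L(m)$; for homogeneous $v$, $\mathrm{wt}\,v$ denotes its $L(0)$-eigenvalue (an integer). For $n\in\mathbb{N}$, homogeneous $u\in V$ and $w\in V$, set $u\circ_n w=\mathrm{Res}_x\,(1+x)^{\mathrm{wt}\,u+n}Y(u,x)w\,x^{-2n-2}$ (a finite sum in $V$; $(1+x)^p$ is expanded in nonnegative powers of $x$), extended linearly in $u$. Let $O_n^\circ(V)=\mathrm{span}\{u\circ_n w: u,w\in V\}$. Write $a\sim_n b$ if $a-b\in O_n^\circ(V)$. Binomial coefficients: $\binom{p}{q}=p(p-1)\cdots(p-q+1)/q!$ for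 $p\in\mathbb{Z}$, $q\in\mathbb{N}$, and $\binom{p}{q}=0$ for $q<0$. *)

theory Defs
  imports Complex_Main
begin

text \<open>The underlying space is a type 'v with a complex scalar multiplication sc,
  the modes are Y u k w = u_k w (coefficient of x^(-k-1) in Y(u,x)w),
  vac is the vacuum, om the conformal vector, c the central charge.\<close>

definition Lop :: "('v \<Rightarrow> int \<Rightarrow> 'v \<Rightarrow> 'v) \<Rightarrow> 'v \<Rightarrow> int \<Rightarrow> 'v \<Rightarrow> 'v" where
  "Lop Y om m = Y om (m + 1)"

definition homog :: "(complex \<Rightarrow> 'v \<Rightarrow> 'v) \<Rightarrow> ('v \<Rightarrow> int \<Rightarrow> 'v \<Rightarrow> 'v) \<Rightarrow> 'v \<Rightarrow> 'v \<Rightarrow> int \<Rightarrow> bool" where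
  "homog sc Y om u k \<longleftrightarrow> Lop Y om 0 u = sc (of_int k) u"

definition is_voa ::
  "(complex \<Rightarrow> 'v::ab_group_add \<Rightarrow> 'v) \<Rightarrow> ('v \<Rightarrow> int \<Rightarrow> 'v \<Rightarrow> 'v) \<Rightarrow> 'v \<Rightarrow> 'v \<Rightarrow> complex \<Rightarrow> bool" where
  "is_voa sc Y vac om c \<longleftrightarrow>
     vector_space sc
     \<comment> \<open>bilinearity of (u,w) \<mapsto> u_k w\<close>
   \<and> (\<forall>k. (\<forall>w. Vector_Spaces.linear sc sc (\<lambda>u. Y u k w)) \<and> (\<forall>u. Vector_Spaces.linear sc sc (Y u k)))
     \<comment> \<open>truncation\<close>
   \<and> (\<forall>u w. \<exists>N. \<forall>k\<ge>N. Y u k w = 0)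
     \<comment> \<open>vacuum and creation\<close>
   \<and> (\<forall>k w. Y vac k w = (if k = -1 then w else 0))
   \<and> (\<forall>u k. k \<ge> 0 \<longrightarrow> Y u k vac = 0) \<and> (\<forall>u. Y u (-1) vac = u)
     \<comment> \<open>Jacobi identity, in Borcherds form (sums stabilise by truncation)\<close>
   \<and> (\<forall>u v w p q r. \<exists>N. \<forall>M\<ge>N.
        (\<Sum>i<M. sc ((of_int p :: complex) gchoose i) (Y (Y u (r + int i) v) (p + q - int i) w))
      = (\<Sum>i<M. sc ((-1) ^ i * ((of_int r :: complex) gchoose i))
            (Y u (p + r - int i) (Y v (q + int i) w)
             - sc ((-1) powi r) (Y v (q + r - int i) (Y u (p + int i) w)))))
     \<comment> \<open>Virasoro relations\<close>
   \<and> (\<forall>m n w. Lop Y om m (Lop Y om n w) - Lop Y om n (Lop Y om m w)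
        = sc (of_int (m - n)) (Lop Y om (m + n) w)
          + (if m + n = 0 then sc ((of_int (m ^ 3 - m) / 12) * c) w else 0))
     \<comment> \<open>L(-1)-derivative property: Y(L(-1)u,x) = d/dx Y(u,x)\<close>
   \<and> (\<forall>u k w. Y (Lop Y om (-1) u) k w = sc (- of_int k) (Y u (k - 1) w))
     \<comment> \<open>integer grading by L(0)-eigenvalues: V is the sum of the weight spaces\<close>
   \<and> (\<forall>v. \<exists>S f. finite S \<and> (\<forall>k\<in>S. homog sc Y om (f k) k) \<and> v = (\<Sum>k\<in>S. f k))
     \<comment> \<open>finite-dimensional weight spaces\<close>
   \<and> (\<forall>k. \<exists>B. finite B \<and> {u. homog sc Y om u k} \<subseteq> module.span sc B)
     \<comment> \<open>grading bounded below\<close>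
   \<and> (\<exists>N. \<forall>k<N. \<forall>u. homog sc Y om u k \<longrightarrow> u = 0)"

text \<open>u \<circ>_n w for homogeneous u of weight k:
  Res_x (1+x)^(k+n) Y(u,x) w x^(-2n-2) = \<Sum>_{i\<ge>0} binom(k+n,i) u_(i-2n-2) w.
  The sum is finite by truncation; we take it up to the least N beyond which
  all modes u_j w with j \<ge> N-2n-2 vanish.\<close>
definition circ ::
  "(complex \<Rightarrow> 'v::ab_group_add \<Rightarrow> 'v) \<Rightarrow> ('v \<Rightarrow> int \<Rightarrow> 'v \<Rightarrow> 'v) \<Rightarrow> nat \<Rightarrow> 'v \<Rightarrow> int \<Rightarrow> 'v \<Rightarrow> 'v" where
  "circ sc Y n u k w =
     (let N = (LEAST N::nat. \<forall>j::int. j \<ge> int N - 2 * int n - 2 \<longrightarrow> Y u j w = 0)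
      in \<Sum>i<N. sc ((of_int (k + int n) :: complex) gchoose i) (Y u (int i - 2 * int n - 2) w))"

text \<open>O_n^\<circ>(V): span of all u \<circ>_n w (u homogeneous of weight k; the linear
  extension in u gives the same span since V is spanned by homogeneous vectors).\<close>
definition Ocirc ::
  "(complex \<Rightarrow> 'v::ab_group_add \<Rightarrow> 'v) \<Rightarrow> ('v \<Rightarrow> int \<Rightarrow> 'v \<Rightarrow> 'v) \<Rightarrow> 'v \<Rightarrow> nat \<Rightarrow> 'v set" where
  "Ocirc sc Y om n = module.span sc {circ sc Y n u k w | u k w. homog sc Y om u k}"

definition equiv_n ::
  "(complex \<Rightarrow> 'v::ab_group_add \<Rightarrow> 'v) \<Rightarrow> ('v \<Rightarrow> int \<Rightarrow> 'v \<Rightarrow> 'v) \<Rightarrow> 'v \<Rightarrow> nat \<Rightarrow> 'v \<Rightarrow> 'v \<Rightarrow> bool" where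
  "equiv_n sc Y om n a b \<longleftrightarrow> a - b \<in> Ocirc sc Y om n"

end

(*
  Put N = n + wt and e t = u_(wt-n-2-t) v. Since Y(L(-1)u, x) = d/dx Y(u, x) and L(-1)
  raises the weight by one, induction on k shows that every residue
  Res_x (1+x)^N Y(u,x) v x^(-2n-2-k) = sum_s binom(N,s) e (k+s) lies in O_n(V), starting from
  the case k = 0, which is u o_n v itself. Hence, modulo O_n(V), e satisfies the linear
  recurrence with characteristic polynomial (1+z)^N, so e p is congruent to
  sum_(t<N) G_t(p) e t, where G_t is the solution with initial values G_t(p) = delta_(t,p)
  for p < N. The product of binomial coefficients in the theorem is this G_t: up to the sign
  (-1)^p it is a polynomial in p of degree < N, hence killed by the N-th finite difference,
  and its initial values are checked directly. For wt = -n the recurrence reads e k = 0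
  modulo O_n(V).
*)
theory Submission
  imports Defs "HOL-Computational_Algebra.Polynomial"
begin

lemma gbinomial_is_poly:
  fixes a :: "'a::field_char_0"
  shows "\<exists>P. degree P \<le> k \<and> (\<forall>x. (x + a) gchoose k = poly P x)"
proof (intro exI conjI allI)
  let ?P = "smult (inverse (fact k)) (\<Prod>i<k. [:a - of_nat i, 1:])"
  have "degree (\<Prod>i<k. [:a - of_nat i, 1:]) \<le> k"
    using degree_prod_sum_le[of "{..<k}" "\<lambda>i. [:a - of_nat i, 1:]"] by simp
  then show "degree ?P \<le> k" by simp
  fix x
  have "fact k * ((x + a) gchoose k) = (\<Prod>i<k. x + a - of_nat i)"
    by (simp add: gbinomial_mult_fact atLeast0LessThan)
  then show "(x + a) gchoose k = poly ?P x"
    by (simp add: poly_prod field_simps)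
qed

lemma alternating_binomial_sum_Suc:
  fixes h :: "nat \<Rightarrow> 'a::comm_ring_1"
  shows "(\<Sum>s\<le>Suc N. (-1)^s * of_nat (Suc N choose s) * h s)
       = (\<Sum>s\<le>N. (-1)^s * of_nat (N choose s) * (h s - h (Suc s)))"
proof -
  let ?A = "\<Sum>s\<le>N. (-1)^s * of_nat (N choose s) * h (Suc s)"
  let ?B = "\<Sum>s\<le>N. (-1)^s * of_nat (N choose Suc s) * h (Suc s)"
  have "h 0 - ?B = (\<Sum>s\<le>Suc N. (-1)^s * of_nat (N choose s) * h s)"
    by (subst sum.atMost_Suc_shift) (simp add: sum_negf)
  also have "\<dots> = (\<Sum>s\<le>N. (-1)^s * of_nat (N choose s) * h s)"
    by (simp add: binomial_eq_0)
  finally have shift: "h 0 - ?B = (\<Sum>s\<le>N. (-1)^s * of_nat (N choose s) * h s)" .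
  have "(\<Sum>s\<le>Suc N. (-1)^s * of_nat (Suc N choose s) * h s)
      = h 0 + (\<Sum>s\<le>N. (-1)^Suc s * of_nat (Suc N choose Suc s) * h (Suc s))"
    by (subst sum.atMost_Suc_shift) simp
  also have "\<dots> = (h 0 - ?B) - ?A"
    by (simp add: ring_distribs sum_subtractf sum_negf)
  also have "\<dots> = (\<Sum>s\<le>N. (-1)^s * of_nat (N choose s) * (h s - h (Suc s)))"
    by (simp only: shift right_diff_distrib sum_subtractf)
  finally show ?thesis .
qed

lemma degree_diff_shift_less:
  fixes P :: "'a::idom poly"
  assumes "degree P > 0"
  shows "degree (P - pcompose P [:1, 1:]) < degree P"
proof -
  let ?Q = "pcompose P [:1, 1:]"
  have deg: "degree ?Q = degree P"
    by (simp add: degree_pcompose)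
  then have "coeff ?Q (degree P) = lead_coeff P"
    using lead_coeff_comp[of "[:1, 1:]" P] by simp
  then have "degree (P - ?Q) \<le> degree P" and "coeff (P - ?Q) (degree P) = 0"
    using degree_diff_le[of P "degree P" ?Q] deg by simp_all
  with assms show ?thesis
    by (metis leading_coeff_0_iff degree_0 le_neq_implies_less)
qed

lemma alternating_binomial_sum_poly:
  fixes P :: "'a::idom poly"
  assumes "degree P < N"
  shows "(\<Sum>s\<le>N. (-1)^s * of_nat (N choose s) * poly P (x + of_nat s)) = 0"
  using assms
proof (induction N arbitrary: P)
  case 0
  then show ?case by simp
next
  case (Suc N)
  define Q where "Q = P - pcompose P [:1, 1:]"
  have "(\<Sum>s\<le>Suc N. (-1)^s * of_nat (Suc N choose s) * poly P (x + of_nat s))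
      = (\<Sum>s\<le>N. (-1)^s * of_nat (N choose s) * poly Q (x + of_nat s))"
    unfolding alternating_binomial_sum_Suc
    by (simp add: Q_def poly_pcompose algebra_simps)
  also have "\<dots> = 0"
  proof (cases "degree P = 0")
    case True
    then have "Q = 0" by (auto simp: Q_def elim: degree_eq_zeroE)
    then show ?thesis by simp
  next
    case False
    then have "degree Q < N" using degree_diff_shift_less[of P] Suc.prems by (simp add: Q_def)
    then show ?thesis by (rule Suc.IH)
  qed
  finally show ?case .
qed

text \<open>With \<open>N = n + wt\<close>, \<open>p = m - n - 1\<close> and \<open>t = j - 1\<close> this is the
  coefficient of \<open>u\<^bsub>wt-n-j-1\<^esub>v\<close> in the theorem.\<close>
definition fundamental_solution :: "nat \<Rightarrow> nat \<Rightarrow> nat \<Rightarrow> 'a::field_char_0" where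
  "fundamental_solution N t p =
     (-1)^(p + N + 1) * (of_nat p gchoose t) * (of_int (int p - int t - 1) gchoose (N - Suc t))"

lemma fundamental_solution_initial:
  assumes "p < N" "t < N"
  shows "fundamental_solution N t p = (if t = p then 1 else 0)"
proof (cases t p rule: linorder_cases)
  case less
  then have "of_int (int p - int t - 1) = (of_nat (p - t - 1) :: 'a)"
    by (simp add: of_nat_diff)
  moreover have "p - t - 1 < N - Suc t"
    using less assms by linarith
  ultimately have "(of_int (int p - int t - 1) :: 'a) gchoose (N - Suc t) = 0"
    by (simp only:) (simp add: binomial_gbinomial [symmetric] binomial_eq_0)
  with less show ?thesis
    unfolding fundamental_solution_def by simp
next
  case equal
  have "(-1 :: 'a) gchoose (N - Suc p) = (-1)^(N - Suc p)"
    by (simp add: gbinomial_negated_upper [of "-1"] binomial_gbinomial [symmetric])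
  moreover have "(-1 :: 'a)^(p + N + 1) * (-1)^(N - Suc p) = 1"
    using assms by (simp add: power_add [symmetric] Suc_diff_Suc)
  ultimately show ?thesis
    using equal by (simp add: fundamental_solution_def binomial_gbinomial [symmetric])
next
  case greater
  then show ?thesis
    by (simp add: fundamental_solution_def binomial_gbinomial [symmetric] binomial_eq_0)
qed

lemma fundamental_solution_recurrence:
  assumes "t < N"
  shows "(\<Sum>s\<le>N. of_nat (N choose s) * fundamental_solution N t (k + s)) = (0 :: 'a::field_char_0)"
proof -
  obtain P1 :: "'a poly" where P1: "degree P1 \<le> t" "\<And>x. (x + 0) gchoose t = poly P1 x"
    using gbinomial_is_poly by blast
  obtain P2 :: "'a poly" where
    P2: "degree P2 \<le> N - Suc t" "\<And>x. (x + (- of_nat t - 1)) gchoose (N - Suc t) = poly P2 x"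
    using gbinomial_is_poly by blast
  have "degree (P1 * P2) \<le> t + (N - Suc t)"
    using degree_mult_le[of P1 P2] P1(1) P2(1) by linarith
  with assms have deg: "degree (P1 * P2) < N"
    by linarith
  have "fundamental_solution N t (k + s)
      = (-1)^(k + N + 1) * ((-1)^s * poly (P1 * P2) (of_nat k + of_nat s))" for s
    using P1(2)[of "of_nat k + of_nat s"] P2(2)[of "of_nat k + of_nat s"]
    by (simp add: fundamental_solution_def power_add algebra_simps)
  then have "(\<Sum>s\<le>N. of_nat (N choose s) * fundamental_solution N t (k + s))
      = (-1)^(k + N + 1) * (\<Sum>s\<le>N. (-1)^s * of_nat (N choose s) * poly (P1 * P2) (of_nat k + of_nat s))"
    by (simp add: sum_distrib_left algebra_simps)
  also have "\<dots> = 0"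
    using alternating_binomial_sum_poly[OF deg] by simp
  finally show ?thesis .
qed

context module
begin

lemma recurrence_mem_subspace:
  fixes a :: "nat \<Rightarrow> 'a" and r :: "nat \<Rightarrow> 'b"
  assumes S: "subspace S" and lead: "a N = 1"
    and rec: "\<And>k. (\<Sum>s\<le>N. a s *s r (k + s)) \<in> S"
    and init: "\<And>p. p < N \<Longrightarrow> r p \<in> S"
  shows "r p \<in> S"
proof (induction p rule: less_induct)
  case (less p)
  show ?case
  proof (cases "p < N")
    case True
    then show ?thesis by (rule init)
  next
    case False
    then obtain k where p: "p = k + N"
      by (metis add.commute le_add_diff_inverse not_less)
    have "r p = (\<Sum>s\<le>N. a s *s r (k + s)) - (\<Sum>s<N. a s *s r (k + s))"
      using lead by (simp add: p lessThan_Suc_atMost [symmetric] add.commute)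
    moreover have "(\<Sum>s<N. a s *s r (k + s)) \<in> S"
      using less.IH by (intro subspace_sum subspace_scale S) (auto simp: p)
    ultimately show ?thesis
      using rec S by (simp add: subspace_diff)
  qed
qed

lemma sum_scale_indicator:
  fixes c :: "nat \<Rightarrow> 'a" and x :: "nat \<Rightarrow> 'b"
  assumes "p < N" "\<And>t. t < N \<Longrightarrow> c t = (if t = p then 1 else 0)"
  shows "(\<Sum>t<N. c t *s x t) = x p"
proof -
  have "(\<Sum>t<N. c t *s x t) = (\<Sum>t<N. if t = p then x t else 0)"
    using assms(2) by (intro sum.cong) auto
  with assms(1) show ?thesis by simp
qed

lemma recurrence_solution_mod_subspace:
  fixes a :: "nat \<Rightarrow> 'a" and G :: "nat \<Rightarrow> nat \<Rightarrow> 'a" and e :: "nat \<Rightarrow> 'b"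
  assumes S: "subspace S" and lead: "a N = 1"
    and rec: "\<And>k. (\<Sum>s\<le>N. a s *s e (k + s)) \<in> S"
    and G_init: "\<And>p t. p < N \<Longrightarrow> t < N \<Longrightarrow> G t p = (if t = p then 1 else 0)"
    and G_rec: "\<And>k t. t < N \<Longrightarrow> (\<Sum>s\<le>N. a s * G t (k + s)) = 0"
  shows "e p - (\<Sum>t<N. G t p *s e t) \<in> S"
proof -
  define r where "r p = e p - (\<Sum>t<N. G t p *s e t)" for p
  have "r p \<in> S"
  proof (rule recurrence_mem_subspace [where a = a and N = N, OF S lead])
    fix k
    have "(\<Sum>s\<le>N. a s *s r (k + s))
        = (\<Sum>s\<le>N. a s *s e (k + s)) - (\<Sum>t<N. (\<Sum>s\<le>N. a s * G t (k + s)) *s e t)"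
      by (simp add: r_def scale_right_diff_distrib scale_sum_right scale_sum_left
          sum_subtractf sum.swap [of _ "{..<N}"])
    also have "\<dots> = (\<Sum>s\<le>N. a s *s e (k + s))"
      using G_rec by simp
    finally show "(\<Sum>s\<le>N. a s *s r (k + s)) \<in> S"
      using rec by simp
  next
    fix p
    assume "p < N"
    then have "r p = 0"
      using G_init by (simp add: r_def sum_scale_indicator)
    then show "r p \<in> S"
      using S by (simp add: subspace_0)
  qed
  then show ?thesis by (simp add: r_def)
qed

end

lemma is_voa_module: "is_voa sc Y vac om c \<Longrightarrow> module sc"
  unfolding is_voa_def module_iff_vector_space by blast

lemma is_voa_mode_scale: "is_voa sc Y vac om c \<Longrightarrow> Y u k (sc a w) = sc a (Y u k w)"
  unfolding is_voa_def by (metis module_hom.scale module_hom_iff_linear)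

lemma is_voa_truncation: "is_voa sc Y vac om c \<Longrightarrow> \<exists>N. \<forall>k\<ge>N. Y u k w = 0"
  unfolding is_voa_def by (elim conjE) (drule spec [of _ u], drule spec [of _ w])

lemma is_voa_L_minus_one_derivative:
  "is_voa sc Y vac om c \<Longrightarrow> Y (Lop Y om (-1) u) k w = sc (- of_int k) (Y u (k - 1) w)"
  unfolding is_voa_def by blast

lemma is_voa_virasoro:
  "is_voa sc Y vac om c \<Longrightarrow> Lop Y om m (Lop Y om n w) - Lop Y om n (Lop Y om m w)
     = sc (of_int (m - n)) (Lop Y om (m + n) w)
       + (if m + n = 0 then sc ((of_int (m ^ 3 - m) / 12) * c) w else 0)"
  unfolding is_voa_def by blast

lemma homog_L_minus_one:
  assumes voa: "is_voa sc Y vac om c" and hom: "homog sc Y om u wt"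
  shows "homog sc Y om (Lop Y om (-1) u) (wt + 1)"
proof -
  interpret V: module sc by (rule is_voa_module [OF voa])
  have "Lop Y om 0 (Lop Y om (-1) u) - Lop Y om (-1) (Lop Y om 0 u) = Lop Y om (-1) u"
    using is_voa_virasoro [OF voa, of 0 "-1" u] by simp
  moreover have "Lop Y om (-1) (Lop Y om 0 u) = sc (of_int wt) (Lop Y om (-1) u)"
    using hom unfolding homog_def by (simp add: Lop_def is_voa_mode_scale [OF voa])
  ultimately show ?thesis
    unfolding homog_def by (simp add: V.scale_left_distrib algebra_simps)
qed

lemma subspace_Ocirc: "is_voa sc Y vac om c \<Longrightarrow> module.subspace sc (Ocirc sc Y om n)"
  unfolding Ocirc_def by (simp add: module.subspace_span is_voa_module)

text \<open>The residue \<open>Res\<^sub>x (1 + x)\<^sup>N Y(u, x) w x\<^sup>-\<^sup>2\<^sup>n\<^sup>-\<^sup>2\<^sup>-\<^sup>k\<close>.\<close>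
definition circ_shifted ::
  "(complex \<Rightarrow> 'v::ab_group_add \<Rightarrow> 'v) \<Rightarrow> ('v \<Rightarrow> int \<Rightarrow> 'v \<Rightarrow> 'v) \<Rightarrow> nat \<Rightarrow> 'v \<Rightarrow> nat \<Rightarrow> nat \<Rightarrow> 'v \<Rightarrow> 'v"
  where "circ_shifted sc Y n u N k w =
    (\<Sum>i\<le>N. sc (of_nat (N choose i)) (Y u (int i - 2 * int n - 2 - int k) w))"

lemma circ_eq_circ_shifted:
  assumes voa: "is_voa sc Y vac om c"
  shows "circ sc Y n u (int N - int n) w = circ_shifted sc Y n u N 0 w"
proof -
  interpret V: module sc by (rule is_voa_module [OF voa])
  let ?vanish = "\<lambda>L::nat. \<forall>j::int. j \<ge> int L - 2 * int n - 2 \<longrightarrow> Y u j w = 0"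
  define L where "L = (LEAST L. ?vanish L)"
  define f where "f i = sc (of_nat (N choose i)) (Y u (int i - 2 * int n - 2) w)" for i
  obtain N0 where "\<forall>k\<ge>N0. Y u k w = 0"
    using is_voa_truncation [OF voa] by blast
  then have "?vanish (nat (N0 + 2 * int n + 2))"
    by auto
  then have "?vanish L"
    unfolding L_def by (rule LeastI)
  then have vanish: "Y u j w = 0" if "j \<ge> int L - 2 * int n - 2" for j
    using that by blast
  have "circ sc Y n u (int N - int n) w = (\<Sum>i<L. f i)"
    unfolding circ_def L_def [symmetric] Let_def f_def
    by (simp add: binomial_gbinomial [symmetric])
  also have "\<dots> = (\<Sum>i<L + N + 1. f i)"
    by (rule sum.mono_neutral_left) (auto simp: f_def vanish)
  also have "\<dots> = (\<Sum>i\<le>N. f i)"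
    by (rule sum.mono_neutral_right) (auto simp: f_def binomial_eq_0)
  finally show ?thesis
    by (simp add: circ_shifted_def f_def)
qed

text \<open>The residue of a total derivative vanishes: integrate
  \<open>Y(L(-1)u, x) = d/dx Y(u, x)\<close> by parts against \<open>(1 + x)\<^sup>N\<^sup>+\<^sup>1 x\<^sup>-\<^sup>2\<^sup>n\<^sup>-\<^sup>2\<^sup>-\<^sup>k\<close>.\<close>
lemma circ_shifted_L_minus_one:
  assumes voa: "is_voa sc Y vac om c"
  shows "circ_shifted sc Y n (Lop Y om (-1) u) (Suc N) k w
     = sc (of_nat (2 * n + 2 + k)) (circ_shifted sc Y n u N (Suc k) w)
       + sc (of_nat (2 * n + 2 + k) - 1 - of_nat N) (circ_shifted sc Y n u N k w)"
proof -
  interpret V: module sc by (rule is_voa_module [OF voa])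
  define T where "T i = Y u (int i - 2 * int n - 3 - int k) w" for i :: nat
  define \<alpha> :: complex where "\<alpha> = of_nat (2 * n + 2 + k)"
  define \<beta> :: complex where "\<beta> = of_nat (2 * n + 2 + k) - 1 - of_nat N"
  define b :: "nat \<Rightarrow> complex" where "b i = of_nat (N choose i)" for i
  define b' :: "nat \<Rightarrow> complex" where "b' i = (if i = 0 then 0 else of_nat (N choose (i - 1)))" for i
  have coeff: "of_nat (Suc N choose i) * (\<alpha> - of_nat i) = \<alpha> * b i + \<beta> * b' i" for i
  proof (cases i)
    case (Suc j)
    have "of_nat (Suc j) * of_nat (Suc N choose Suc j) = (of_nat (Suc N) * of_nat (N choose j) :: complex)"
      by (metis Suc_times_binomial_eq mult.commute of_nat_mult)
    then show ?thesis
      by (simp add: Suc b_def b'_def \<alpha>_def \<beta>_def algebra_simps)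
  qed (simp add: b_def b'_def)
  have "circ_shifted sc Y n (Lop Y om (-1) u) (Suc N) k w
      = (\<Sum>i\<le>Suc N. sc (of_nat (Suc N choose i) * (\<alpha> - of_nat i)) (T i))"
    unfolding circ_shifted_def is_voa_L_minus_one_derivative [OF voa]
    by (rule sum.cong) (simp_all add: T_def \<alpha>_def algebra_simps)
  also have "\<dots> = sc \<alpha> (\<Sum>i\<le>Suc N. sc (b i) (T i)) + sc \<beta> (\<Sum>i\<le>Suc N. sc (b' i) (T i))"
    by (simp only: coeff V.scale_left_distrib V.scale_sum_right V.scale_scale sum.distrib)
  also have "(\<Sum>i\<le>Suc N. sc (b i) (T i)) = circ_shifted sc Y n u N (Suc k) w"
    by (simp add: circ_shifted_def b_def T_def binomial_eq_0 algebra_simps)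
  also have "(\<Sum>i\<le>Suc N. sc (b' i) (T i)) = circ_shifted sc Y n u N k w"
    unfolding circ_shifted_def by (subst sum.atMost_Suc_shift) (simp add: b'_def T_def algebra_simps)
  finally show ?thesis
    by (simp add: \<alpha>_def \<beta>_def)
qed

lemma circ_shifted_in_Ocirc:
  assumes voa: "is_voa sc Y vac om c" and hom: "homog sc Y om u (int N - int n)"
  shows "circ_shifted sc Y n u N k w \<in> Ocirc sc Y om n"
  using hom
proof (induction k arbitrary: u N)
  case 0
  then show ?case
    unfolding circ_eq_circ_shifted [OF voa, symmetric] Ocirc_def
    by (intro module.span_base [OF is_voa_module [OF voa]]) blast
next
  case (Suc k)
  interpret V: module sc by (rule is_voa_module [OF voa])
  have S: "V.subspace (Ocirc sc Y om n)"
    by (rule subspace_Ocirc [OF voa])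
  define \<alpha> :: complex where "\<alpha> = of_nat (2 * n + 2 + k)"
  define \<beta> :: complex where "\<beta> = of_nat (2 * n + 2 + k) - 1 - of_nat N"
  have "\<alpha> \<noteq> 0"
    unfolding \<alpha>_def by (metis add_is_0 of_nat_eq_0_iff zero_neq_numeral)
  have "homog sc Y om (Lop Y om (-1) u) (int (Suc N) - int n)"
    using homog_L_minus_one [OF voa Suc.prems] by (simp add: algebra_simps)
  then have "circ_shifted sc Y n (Lop Y om (-1) u) (Suc N) k w \<in> Ocirc sc Y om n"
    by (rule Suc.IH)
  moreover have "circ_shifted sc Y n u N k w \<in> Ocirc sc Y om n"
    by (rule Suc.IH [OF Suc.prems])
  ultimately have "sc \<alpha> (circ_shifted sc Y n u N (Suc k) w) \<in> Ocirc sc Y om n"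
    using V.subspace_diff [OF S] V.subspace_scale [OF S]
    unfolding circ_shifted_L_minus_one [OF voa] \<alpha>_def \<beta>_def
    by (metis add_diff_cancel_right')
  then have "sc (1 / \<alpha>) (sc \<alpha> (circ_shifted sc Y n u N (Suc k) w)) \<in> Ocirc sc Y om n"
    by (rule V.subspace_scale [OF S])
  with \<open>\<alpha> \<noteq> 0\<close> show ?case
    by simp
qed

lemma circ_shifted_reflect:
  "circ_shifted sc Y n u N k w
     = (\<Sum>s\<le>N. sc (of_nat (N choose s)) (Y u (int N - 2 * int n - 2 - int (k + s)) w))"
  unfolding circ_shifted_def
  by (subst sum.atLeastAtMost_rev [of _ 0 N, simplified atLeast0AtMost])
    (auto intro!: sum.cong simp: binomial_symmetric [symmetric] algebra_simps)

definition reduced_mode ::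
  "(complex \<Rightarrow> 'v::ab_group_add \<Rightarrow> 'v) \<Rightarrow> ('v \<Rightarrow> int \<Rightarrow> 'v \<Rightarrow> 'v) \<Rightarrow> nat \<Rightarrow> 'v \<Rightarrow> int \<Rightarrow> int \<Rightarrow> 'v \<Rightarrow> 'v"
  where "reduced_mode sc Y n u wt m v =
    sc ((-1) powi (m + wt))
      (\<Sum>j\<in>{1..nat (int n + wt)}.
         sc (((of_int (m - int n - 1) :: complex) gchoose (j - 1))
             * ((of_int (m - int n - int j - 1) :: complex) gchoose (nat (int n + wt) - j)))
            (Y u (wt - int n - int j - 1) v))"

lemma reduced_mode_eq:
  assumes "module sc" and N: "int N = int n + wt" and m: "m = int p + int n + 1"
  shows "reduced_mode sc Y n u wt m v
    = (\<Sum>t<N. sc (fundamental_solution N t p) (Y u (int N - 2 * int n - 2 - int t) v))"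
proof -
  interpret V: module sc by fact
  have "m + wt = int (p + N + 1)"
    using N m by simp
  then have "(-1) powi (m + wt) = ((-1 :: complex) ^ (p + N + 1))"
    by (simp only: power_int_of_nat)
  moreover have "nat (int n + wt) = N"
    using N by simp
  ultimately show ?thesis
    unfolding reduced_mode_def
    by (simp add: sum.atLeast1_atMost_eq V.scale_sum_right fundamental_solution_def m N
        algebra_simps)
qed

lemma reduced_mode_initial:
  assumes "module sc" and N: "int N = int n + wt" and m: "m = int p + int n + 1" and "p < N"
  shows "reduced_mode sc Y n u wt m v = Y u (wt - m - 1) v"
proof -
  interpret V: module sc by fact
  have "reduced_mode sc Y n u wt m v
      = (\<Sum>t<N. sc (fundamental_solution N t p) (Y u (int N - 2 * int n - 2 - int t) v))"
    by (rule reduced_mode_eq [OF V.module_axioms N m])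
  also have "\<dots> = Y u (int N - 2 * int n - 2 - int p) v"
    using \<open>p < N\<close> by (intro V.sum_scale_indicator) (simp_all add: fundamental_solution_initial)
  also have "int N - 2 * int n - 2 - int p = wt - m - 1"
    using N m by simp
  finally show ?thesis .
qed

lemma mode_mod_Ocirc:
  assumes voa: "is_voa sc Y vac om c" and hom: "homog sc Y om u wt"
    and N: "int N = int n + wt" and m: "m = int p + int n + 1"
  shows "Y u (wt - m - 1) v - reduced_mode sc Y n u wt m v \<in> Ocirc sc Y om n"
proof -
  define e where "e t = Y u (int N - 2 * int n - 2 - int t) v" for t
  have "homog sc Y om u (int N - int n)"
    using hom N by simp
  then have "(\<Sum>s\<le>N. sc (of_nat (N choose s)) (e (k + s))) \<in> Ocirc sc Y om n" for k
    using circ_shifted_in_Ocirc [OF voa] unfolding circ_shifted_reflect e_def by blast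
  then have "e p - (\<Sum>t<N. sc (fundamental_solution N t p) (e t)) \<in> Ocirc sc Y om n"
    by (intro module.recurrence_solution_mod_subspace [OF is_voa_module [OF voa] subspace_Ocirc [OF voa],
          where a = "\<lambda>s. of_nat (N choose s)"])
      (simp_all add: fundamental_solution_initial fundamental_solution_recurrence)
  moreover have "int N - 2 * int n - 2 - int p = wt - m - 1"
    using N m by simp
  ultimately show ?thesis
    unfolding reduced_mode_eq [OF is_voa_module [OF voa] N m] by (simp add: e_def)
qed

theorem proposition3p2:
  fixes sc :: "complex \<Rightarrow> 'v::ab_group_add \<Rightarrow> 'v"
    and Y :: "'v \<Rightarrow> int \<Rightarrow> 'v \<Rightarrow> 'v"
    and vac om :: 'v and c :: complex
    and n :: nat and u v :: 'v and wt :: int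
  assumes voa: "is_voa sc Y vac om c"
    and hom: "homog sc Y om u wt"
  shows
    "(wt > - int n \<longrightarrow>
       (\<forall>m::int. m \<ge> int n + 1 \<longrightarrow>
          equiv_n sc Y om n (Y u (wt - m - 1) v)
            (sc ((-1) powi (m + wt))
               (\<Sum>j\<in>{1..nat (int n + wt)}.
                  sc (((of_int (m - int n - 1) :: complex) gchoose (j - 1))
                      * ((of_int (m - int n - int j - 1) :: complex) gchoose (nat (int n + wt) - j)))
                     (Y u (wt - int n - int j - 1) v))))
       \<and> (\<forall>m::int. int n + 1 \<le> m \<and> m \<le> 2 * int n + wt \<longrightarrow>
          sc ((-1) powi (m + wt))
               (\<Sum>j\<in>{1..nat (int n + wt)}.
                  sc (((of_int (m - int n - 1) :: complex) gchoose (j - 1))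
                      * ((of_int (m - int n - int j - 1) :: complex) gchoose (nat (int n + wt) - j)))
                     (Y u (wt - int n - int j - 1) v))
          = Y u (wt - m - 1) v))
     \<and> (wt = - int n \<longrightarrow>
       (\<forall>m::int. m \<ge> int n + 1 \<longrightarrow> equiv_n sc Y om n (Y u (wt - m - 1) v) 0))"
  unfolding reduced_mode_def [symmetric] equiv_n_def
proof (intro conjI impI allI)
  fix m
  define N where "N = nat (int n + wt)"
  define p where "p = nat (m - int n - 1)"
  {
    assume "wt > - int n" and "int n + 1 \<le> m"
    then have "int N = int n + wt" and "m = int p + int n + 1"
      by (simp_all add: N_def p_def)
    then show "Y u (wt - m - 1) v - reduced_mode sc Y n u wt m v \<in> Ocirc sc Y om n"
      by (rule mode_mod_Ocirc [OF voa hom])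
  next
    assume "wt > - int n" and "int n + 1 \<le> m \<and> m \<le> 2 * int n + wt"
    then have "int N = int n + wt" and "m = int p + int n + 1" and "p < N"
      by (simp_all add: N_def p_def)
    then show "reduced_mode sc Y n u wt m v = Y u (wt - m - 1) v"
      by (rule reduced_mode_initial [OF is_voa_module [OF voa]])
  next
    assume "wt = - int n" and "int n + 1 \<le> m"
    moreover from this have "reduced_mode sc Y n u wt m v = 0"
      by (simp add: reduced_mode_def module.scale_zero_right [OF is_voa_module [OF voa]])
    ultimately show "Y u (wt - m - 1) v - 0 \<in> Ocirc sc Y om n"
      using mode_mod_Ocirc [OF voa hom, where N = 0 and n = n and m = m and p = p and v = v]
      by (simp add: p_def)
  }
qed

end
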